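(* Let $A$ be an invertible $n$-by-$n$ doubly nonnegative matrix and let $W=[w_{ij}]$ be its sign change matrix. Then: (1) if $w_{ij}=0$ or $w_{ij}=1$, the critical exponent of the $i,j$-entry of $A$ is $0$; (2) if $w_{ij}=2$, the critical exponent of the $i,j$-entry of $A$ is at most $1$.
   Context: A real matrix is doubly nonnegative if it is symmetric, positive semidefinite, and entry-wise nonnegative. Write $A=UDU^T$ with $U=[u_{ij}]$ real orthogonal and $D=\mathrm{diag}(\lambda_1,\dots,\lambda_n)$, $\lambda_1\ge\cdots\ge\lambda_n>0$; for real $t\ge 0$, $A^t=UD^tU^T$ (so $A^0=I_n$), and $(A^t)_{ij}=\sum_k u_{ik}u_{jk}\lambda_k^t$. The sign change matrix $W$ has $w_{ij}$ equal to the number of sign changes in the coefficient sequence $(u_{i1}u_{j1},\dots,u_{in}u_{jn})$, arranged in decreasing order of the corresponding eigenvalues (zeros ignored). The critical exponent of the $i,j$-entry of $A$ is the least $m\ge 0$ such that $(A^t)_{ij}\ge 0$ for all $t\ge m$. *)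

theory Defs
  imports Complex_Main "Jordan_Normal_Form.Matrix"
begin

definition doubly_nonnegative :: "nat \<Rightarrow> real mat \<Rightarrow> bool" where
  "doubly_nonnegative n A \<longleftrightarrow>
     A \<in> carrier_mat n n \<and> A\<^sup>T = A \<and>
     (\<forall>x \<in> carrier_vec n. x \<bullet> (A *\<^sub>v x) \<ge> 0) \<and>
     (\<forall>i<n. \<forall>j<n. A $$ (i,j) \<ge> 0)"

definition real_orthogonal :: "nat \<Rightarrow> real mat \<Rightarrow> bool" where
  "real_orthogonal n U \<longleftrightarrow> U \<in> carrier_mat n n \<and> U * U\<^sup>T = 1\<^sub>m n \<and> U\<^sup>T * U = 1\<^sub>m n"

definition sign_changes :: "real list \<Rightarrow> nat" where
  "sign_changes xs = (let ys = filter (\<lambda>x. x \<noteq> 0) xs in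
     length (filter (\<lambda>k. ys ! k * ys ! (Suc k) < 0) [0..<length ys - 1]))"

(* entry w_ij of the sign change matrix for the decomposition A = U diag(lam) U^T,
   with columns of U ordered by decreasing eigenvalues lam 0 >= ... >= lam (n-1) *)
definition sign_change_entry :: "nat \<Rightarrow> real mat \<Rightarrow> nat \<Rightarrow> nat \<Rightarrow> nat" where
  "sign_change_entry n U i j = sign_changes (map (\<lambda>k. U $$ (i,k) * U $$ (j,k)) [0..<n])"

(* (A^t)_ij = sum_k u_ik u_jk lam_k^t, where A = U diag(lam) U^T *)
definition mat_rpow_entry :: "nat \<Rightarrow> real mat \<Rightarrow> (nat \<Rightarrow> real) \<Rightarrow> real \<Rightarrow> nat \<Rightarrow> nat \<Rightarrow> real" where
  "mat_rpow_entry n U lam t i j = (\<Sum>k<n. U $$ (i,k) * U $$ (j,k) * lam k powr t)"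

definition critical_exponent :: "nat \<Rightarrow> real mat \<Rightarrow> (nat \<Rightarrow> real) \<Rightarrow> nat \<Rightarrow> nat \<Rightarrow> real" where
  "critical_exponent n U lam i j =
     (LEAST m::real. m \<ge> 0 \<and> (\<forall>t\<ge>m. mat_rpow_entry n U lam t i j \<ge> 0))"

end

theory Submission
  imports Defs
begin

(*
  Put c_k = u_ik u_jk and a_k = ln lambda_k, which is nonincreasing in k. Then (A^t)_ij is the
  exponential sum f(t) = sum_k c_k exp(t a_k); it is nonnegative at every natural t because the
  powers of A are entrywise nonnegative, and f(0) = delta_ij.
  If the c_k change sign at most once, at index p, then exp(-t a_p) f(t) is monotone in t, so
  for t >= 0 it is bounded below by its value at a neighbouring integer.
  With two sign changes, at p and q, the derivative of exp(-t a_p) f(t) is a positive multiple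
  of an exponential sum whose coefficients c_k (a_k - a_p) (a_k - a_q) all have the same sign;
  that sum is monotone, so the derivative changes sign at most once. The mean value theorem
  between consecutive integers, and between 0 and 1 using f(0) = 0 for i ~= j, then gives
  f(t) >= 0 for all t >= 1.
*)

fun sign_blocks :: "real \<Rightarrow> nat \<Rightarrow> real list \<Rightarrow> bool" where
  "sign_blocks s 0 xs \<longleftrightarrow> (\<forall>x\<in>set xs. 0 \<le> s * x)"
| "sign_blocks s (Suc m) xs \<longleftrightarrow>
     (\<exists>a b. xs = a @ b \<and> (\<forall>x\<in>set a. 0 \<le> s * x) \<and> sign_blocks (- s) m b)"

lemma sign_blocks_zeros: "\<forall>x\<in>set xs. x = 0 \<Longrightarrow> sign_blocks s m xs"
proof (induction m arbitrary: s)
  case (Suc m)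
  then show ?case by (metis sign_blocks.simps(2) append_Nil empty_iff list.set(1))
qed auto

lemma sign_blocks_Cons: "sign_blocks s m xs \<Longrightarrow> 0 \<le> s * x \<Longrightarrow> sign_blocks s m (x # xs)"
  by (cases m) (auto, metis append_Cons set_ConsD)

lemma sign_changes_Cons_zero: "sign_changes (0 # xs) = sign_changes xs"
  by (simp add: sign_changes_def)

lemma sign_changes_Cons:
  assumes "x \<noteq> 0" and "filter (\<lambda>x. x \<noteq> 0) xs = z # zs"
  shows "sign_changes (x # xs) = (if x * z < 0 then 1 else 0) + sign_changes xs"
proof -
  define P where "P ys k \<longleftrightarrow> ys ! k * ys ! Suc k < (0::real)" for ys k
  have changes: "sign_changes xs' = length (filter (P ys) [0..<length ys - 1])"
    if "filter (\<lambda>x. x \<noteq> 0) xs' = ys" for xs' ys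
    using that unfolding sign_changes_def Let_def P_def by simp
  have upt: "[0..<length (x # z # zs) - 1] = 0 # map Suc [0..<length (z # zs) - 1]"
    by (simp only: length_Cons diff_Suc_1 map_Suc_upt) (rule upt_conv_Cons, simp)
  have "sign_changes (x # xs) =
      length (filter (P (x # z # zs)) (0 # map Suc [0..<length (z # zs) - 1]))"
    unfolding upt[symmetric] using assms by (intro changes) simp
  also have "\<dots> = (if x * z < 0 then 1 else 0) +
      length (filter (P (x # z # zs) \<circ> Suc) [0..<length (z # zs) - 1])"
    by (simp only: filter.simps filter_map length_map) (simp add: P_def)
  also have "P (x # z # zs) \<circ> Suc = P (z # zs)"
    by (simp add: P_def fun_eq_iff)
  finally show ?thesis
    using changes[OF assms(2)] by simp
qed

lemma sign_blocks_if_sign_changes_le: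
  assumes "sign_changes xs \<le> m"
    and "\<And>z zs. filter (\<lambda>x. x \<noteq> 0) xs = z # zs \<Longrightarrow> 0 < s * z"
  shows "sign_blocks s m xs"
  using assms
proof (induction xs arbitrary: m s)
  case Nil
  then show ?case by (simp add: sign_blocks_zeros)
next
  case (Cons x xs)
  show ?case
  proof (cases "x = 0")
    case True
    then show ?thesis
      using Cons by (auto simp: sign_changes_Cons_zero intro!: sign_blocks_Cons)
  next
    case False
    then have sx: "0 < s * x" using Cons.prems(2) by simp
    show ?thesis
    proof (cases "filter (\<lambda>x. x \<noteq> 0) xs")
      case Nil
      then have "sign_blocks s m xs" by (simp add: sign_blocks_zeros filter_empty_conv)
      then show ?thesis using sx by (simp add: sign_blocks_Cons)
    next
      case (Cons z zs)
      then have "z \<in> set (filter (\<lambda>x. x \<noteq> 0) xs)" by simp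
      then have "z \<noteq> 0" by simp
      have changes: "sign_changes (x # xs) = (if x * z < 0 then 1 else 0) + sign_changes xs"
        using \<open>x \<noteq> 0\<close> Cons by (rule sign_changes_Cons)
      show ?thesis
      proof (cases "x * z < 0")
        case True
        then obtain m' where m: "m = Suc m'"
          using changes \<open>sign_changes (x # xs) \<le> m\<close> by (cases m) auto
        have "0 < - s * z"
          using sx True by (auto simp: zero_less_mult_iff mult_less_0_iff)
        then have "sign_blocks (- s) m' xs"
          using changes \<open>sign_changes (x # xs) \<le> m\<close> True Cons m by (intro Cons.IH) auto
        then show ?thesis
          unfolding m sign_blocks.simps using sx
          by (intro exI[of _ "[x]"] exI[of _ xs] conjI) simp_all
      next
        case False
        then have "0 < s * z"
          using sx \<open>x \<noteq> 0\<close> \<open>z \<noteq> 0\<close>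
          by (auto simp: zero_less_mult_iff mult_less_0_iff linorder_neq_iff)
        then have "sign_blocks s m xs"
          using changes \<open>sign_changes (x # xs) \<le> m\<close> False Cons by (intro Cons.IH) auto
        then show ?thesis using sx by (simp add: sign_blocks_Cons)
      qed
    qed
  qed
qed

lemma sign_blocks_exists:
  assumes "sign_changes xs \<le> m"
  shows "\<exists>s\<in>{1, -1}. sign_blocks s m xs"
proof (cases "filter (\<lambda>x. x \<noteq> 0) xs")
  case Nil
  then show ?thesis by (auto simp: sign_blocks_zeros filter_empty_conv)
next
  case (Cons z zs)
  then have "z \<in> set (filter (\<lambda>x. x \<noteq> 0) xs)" by simp
  then have "z \<noteq> 0" by simp
  then have "0 < sgn z * z" by (auto simp: sgn_if)
  then have "sign_blocks (sgn z) m xs"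
    using assms Cons by (intro sign_blocks_if_sign_changes_le) auto
  then show ?thesis using \<open>z \<noteq> 0\<close> by (auto simp: sgn_if split: if_splits)
qed

lemma sign_blocks_0_upt:
  "sign_blocks s 0 (map c [l..<n]) \<Longrightarrow> k \<in> {l..<n} \<Longrightarrow> 0 \<le> s * c k"
  by simp

lemma sign_blocks_Suc_upt:
  assumes "sign_blocks s (Suc m) (map c [l..<n])" and "l \<le> n"
  obtains p where "l \<le> p" "p \<le> n" "\<forall>k\<in>{l..<p}. 0 \<le> s * c k"
    "sign_blocks (- s) m (map c [p..<n])"
proof -
  obtain a b where split: "map c [l..<n] = a @ b"
    and a: "\<forall>x\<in>set a. 0 \<le> s * x" and b: "sign_blocks (- s) m b"
    using assms by auto
  have len: "length a \<le> n - l"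
    using arg_cong[OF split, of length] by simp
  have "take (length a) [l..<n] = [l..<l + length a]"
    using len by (cases a) (auto intro!: take_upt)
  then have a_eq: "a = map c [l..<l + length a]" and b_eq: "b = map c [l + length a..<n]"
    using arg_cong[OF split, of "take (length a)"] arg_cong[OF split, of "drop (length a)"]
    by (simp_all add: take_map drop_map)
  have "0 \<le> s * c k" if "l \<le> k" "k < l + length a" for k
  proof -
    have "c k \<in> set a" by (subst a_eq) (use that in simp)
    then show ?thesis using a by blast
  qed
  moreover have "l + length a \<le> n"
    using len \<open>l \<le> n\<close> by simp
  ultimately show ?thesis
    using that[of "l + length a"] b b_eq by auto
qed

definition exp_sum :: "nat \<Rightarrow> (nat \<Rightarrow> real) \<Rightarrow> (nat \<Rightarrow> real) \<Rightarrow> real \<Rightarrow> real" where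
  "exp_sum n c a t = (\<Sum>k<n. c k * exp (t * a k))"

lemma exp_sum_shift: "exp_sum n c a t = exp (t * g) * exp_sum n c (\<lambda>k. a k - g) t"
  unfolding exp_sum_def sum_distrib_left
  by (rule sum.cong) (simp_all add: algebra_simps flip: exp_add)

lemma exp_sum_shift_nonneg_iff: "0 \<le> exp_sum n c (\<lambda>k. a k - g) t \<longleftrightarrow> 0 \<le> exp_sum n c a t"
  by (simp add: exp_sum_shift[of n c a t g] zero_le_mult_iff)

lemma exp_sum_at_0: "exp_sum n c a 0 = (\<Sum>k<n. c k)"
  by (simp add: exp_sum_def)

lemma has_real_derivative_exp_sum:
  "(exp_sum n c a has_real_derivative exp_sum n (\<lambda>k. c k * a k) a t) (at t)"
  unfolding exp_sum_def by (auto intro!: derivative_eq_intros sum.cong simp: mult_ac)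

lemma continuous_on_exp_sum: "continuous_on S (exp_sum n c a)"
  unfolding exp_sum_def by (intro continuous_intros)

lemma exp_sum_mono:
  assumes "\<And>k. k < n \<Longrightarrow> 0 \<le> s * c k * a k" and "t \<le> t'"
  shows "s * exp_sum n c a t \<le> s * exp_sum n c a t'"
proof (rule DERIV_nonneg_imp_nondecreasing[OF \<open>t \<le> t'\<close>])
  fix x
  have "((\<lambda>t. s * exp_sum n c a t) has_real_derivative s * exp_sum n (\<lambda>k. c k * a k) a x) (at x)"
    by (rule DERIV_cmult) (rule has_real_derivative_exp_sum)
  moreover have "0 \<le> s * exp_sum n (\<lambda>k. c k * a k) a x"
    unfolding exp_sum_def sum_distrib_left
    by (intro sum_nonneg) (use assms(1) in \<open>simp add: mult.assoc[symmetric]\<close>)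
  ultimately show "\<exists>y. ((\<lambda>t. s * exp_sum n c a t) has_real_derivative y) (at x) \<and> 0 \<le> y"
    by blast
qed

lemma nonneg_if_monotone_nonneg_at_nat:
  fixes h :: "real \<Rightarrow> real"
  assumes "mono h \<or> antimono h" and "\<And>m::nat. 0 \<le> h (real m)" and "0 \<le> t"
  shows "0 \<le> h t"
  using assms(1)
proof
  assume "mono h"
  then show ?thesis
    using assms(2)[of "nat \<lfloor>t\<rfloor>"] \<open>0 \<le> t\<close> by (smt (verit) monoD of_nat_floor)
next
  assume "antimono h"
  then show ?thesis
    using assms(2)[of "nat \<lceil>t\<rceil>"] \<open>0 \<le> t\<close> by (smt (verit) antimonoD of_nat_ceiling)
qed

lemma nonneg_after_one_if_deriv_sign_mono:
  fixes h e g :: "real \<Rightarrow> real"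
  assumes deriv: "\<And>x. (h has_real_derivative e x * g x) (at x)" and e: "\<And>x. 0 < e x"
    and "mono g" and "h 0 = 0" and "0 \<le> h 1" and "1 \<le> t"
  shows "0 \<le> h t"
proof -
  obtain z where z: "z < 1" "h 1 - h 0 = (1 - 0) * (e z * g z)"
    using MVT2[of 0 1 h "\<lambda>x. e x * g x"] deriv by auto
  have "0 \<le> g z"
    using z \<open>h 0 = 0\<close> \<open>0 \<le> h 1\<close> e[of z] by (simp add: zero_le_mult_iff)
  show ?thesis
  proof (cases "t = 1")
    case False
    then obtain z' where z': "1 < z'" "h t - h 1 = (t - 1) * (e z' * g z')"
      using MVT2[of 1 t h "\<lambda>x. e x * g x"] deriv \<open>1 \<le> t\<close> by auto
    have "g z \<le> g z'"
      using \<open>mono g\<close> z z' by (simp add: monoD)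
    then have "0 \<le> h t - h 1"
      using z' \<open>0 \<le> g z\<close> \<open>1 \<le> t\<close> e[of z'] by simp
    then show ?thesis using \<open>0 \<le> h 1\<close> by simp
  qed (use \<open>0 \<le> h 1\<close> in simp)
qed

lemma nonneg_if_deriv_sign_antimono_nonneg_at_nat:
  fixes h e g :: "real \<Rightarrow> real"
  assumes deriv: "\<And>x. (h has_real_derivative e x * g x) (at x)" and e: "\<And>x. 0 < e x"
    and "antimono g" and at_nat: "\<And>m::nat. 0 \<le> h (real m)" and "0 \<le> t"
  shows "0 \<le> h t"
proof (rule ccontr)
  assume neg: "\<not> 0 \<le> h t"
  define m where "m = nat \<lfloor>t\<rfloor>"
  have "real m \<le> t" "t < real (Suc m)"
    using \<open>0 \<le> t\<close> unfolding m_def by linarith+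
  moreover have "real m \<noteq> t"
    using neg at_nat[of m] by auto
  ultimately have "real m < t" "t < real (Suc m)"
    by simp_all
  obtain z1 where z1: "z1 < t" "h t - h (real m) = (t - real m) * (e z1 * g z1)"
    using MVT2[OF \<open>real m < t\<close>, of h "\<lambda>x. e x * g x"] deriv by auto
  obtain z2 where z2: "t < z2" "h (real (Suc m)) - h t = (real (Suc m) - t) * (e z2 * g z2)"
    using MVT2[OF \<open>t < real (Suc m)\<close>, of h "\<lambda>x. e x * g x"] deriv by auto
  have "(t - real m) * (e z1 * g z1) < 0"
    using z1 neg at_nat[of m] by linarith
  then have "g z1 < 0"
    using \<open>real m < t\<close> e[of z1] by (simp add: mult_less_0_iff)
  moreover have "0 < (real (Suc m) - t) * (e z2 * g z2)"
    using z2 neg at_nat[of "Suc m"] by linarith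
  then have "0 < g z2"
    using \<open>t < real (Suc m)\<close> e[of z2] by (simp add: zero_less_mult_iff)
  moreover have "g z2 \<le> g z1"
    using \<open>antimono g\<close> z1 z2 by (simp add: antimonoD)
  ultimately show False by simp
qed

lemma exp_sum_nonneg_if_one_sign_change:
  assumes anti: "\<And>k l. k \<le> l \<Longrightarrow> l < n \<Longrightarrow> a l \<le> a k"
    and at_nat: "\<And>m::nat. 0 \<le> exp_sum n c a (real m)"
    and changes: "sign_changes (map c [0..<n]) \<le> 1" and "0 \<le> t"
  shows "0 \<le> exp_sum n c a t"
proof -
  obtain s where s: "s \<in> {1, -1}" and blocks: "sign_blocks s (Suc 0) (map c [0..<n])"
    using sign_blocks_exists[OF changes[unfolded One_nat_def]] by blast
  obtain p where pos: "\<forall>k\<in>{0..<p}. 0 \<le> s * c k"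
    and rest: "sign_blocks (- s) 0 (map c [p..<n])"
    using sign_blocks_Suc_upt[OF blocks le0] by blast
  note neg = sign_blocks_0_upt[OF rest]
  \<comment> \<open>\<open>min\<close> only matters for an empty last block, \<open>p = n\<close>, where \<open>a n\<close> would be junk.\<close>
  define \<alpha> where "\<alpha> = a (min p (n - 1))"
  define h where "h = exp_sum n c (\<lambda>k. a k - \<alpha>)"
  have "0 \<le> s * c k * (a k - \<alpha>)" if "k < n" for k
  proof (cases "k < p")
    case True
    then show ?thesis
      using pos anti[of k "min p (n - 1)"] \<open>k < n\<close> unfolding \<alpha>_def by simp
  next
    case False
    then show ?thesis
      using neg[of k] anti[of p k] \<open>k < n\<close> unfolding \<alpha>_def
      by (simp add: mult_nonpos_nonpos)
  qed
  then have "s * h x \<le> s * h y" if "x \<le> y" for x y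
    unfolding h_def using that by (intro exp_sum_mono)
  then have "mono h \<or> antimono h"
    using s by (auto intro!: monoI antimonoI)
  moreover have "0 \<le> h (real m)" for m
    unfolding h_def exp_sum_shift_nonneg_iff by (rule at_nat)
  ultimately have "0 \<le> h t"
    using \<open>0 \<le> t\<close> by (rule nonneg_if_monotone_nonneg_at_nat)
  then show ?thesis
    unfolding h_def exp_sum_shift_nonneg_iff .
qed

lemma exp_sum_nonneg_if_two_sign_changes:
  assumes anti: "\<And>k l. k \<le> l \<Longrightarrow> l < n \<Longrightarrow> a l \<le> a k"
    and at_nat: "\<And>m::nat. 0 \<le> exp_sum n c a (real m)"
    and changes: "sign_changes (map c [0..<n]) \<le> 2"
    and zero: "exp_sum n c a 0 = 0" and "1 \<le> t"
  shows "0 \<le> exp_sum n c a t"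
proof -
  obtain s where s: "s \<in> {1, -1}" and blocks: "sign_blocks s (Suc (Suc 0)) (map c [0..<n])"
    using sign_blocks_exists[OF changes[unfolded numeral_2_eq_2]] by blast
  obtain p where "p \<le> n" and pos: "\<forall>k\<in>{0..<p}. 0 \<le> s * c k"
    and rest: "sign_blocks (- s) (Suc 0) (map c [p..<n])"
    using sign_blocks_Suc_upt[OF blocks le0] by blast
  obtain q where "p \<le> q" and neg: "\<forall>k\<in>{p..<q}. 0 \<le> - s * c k"
    and rest': "sign_blocks s 0 (map c [q..<n])"
    using sign_blocks_Suc_upt[OF rest \<open>p \<le> n\<close>, unfolded minus_minus] by blast
  note pos' = sign_blocks_0_upt[OF rest']
  define \<alpha> where "\<alpha> = a (min p (n - 1))"
  define \<beta> where "\<beta> = a (min q (n - 1))"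
  define h where "h = exp_sum n c (\<lambda>k. a k - \<alpha>)"
  define d where "d k = c k * (a k - \<alpha>)" for k
  define g where "g = exp_sum n d (\<lambda>k. a k - \<beta>)"
  have deriv: "(h has_real_derivative exp (x * (\<beta> - \<alpha>)) * g x) (at x)" for x
    using has_real_derivative_exp_sum[of n c "\<lambda>k. a k - \<alpha>" x]
    unfolding h_def g_def d_def exp_sum_shift[of n _ "\<lambda>k. a k - \<alpha>" x "\<beta> - \<alpha>"]
    by simp
  have "0 \<le> s * d k * (a k - \<beta>)" if "k < n" for k
  proof -
    have "0 \<le> (s * c k) * ((a k - \<alpha>) * (a k - \<beta>))"
    proof -
      consider "k < p" | "p \<le> k" "k < q" | "q \<le> k" by linarith
      then show ?thesis
      proof cases
        case 1
        have "0 \<le> s * c k" "0 \<le> a k - \<alpha>" "0 \<le> a k - \<beta>"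
          using pos 1 anti[of k "min p (n - 1)"] anti[of k "min q (n - 1)"]
            \<open>k < n\<close> \<open>p \<le> q\<close>
          unfolding \<alpha>_def \<beta>_def by auto
        then show ?thesis by (rule mult_nonneg_nonneg[OF _ mult_nonneg_nonneg])
      next
        case 2
        have "s * c k \<le> 0" "a k - \<alpha> \<le> 0" "0 \<le> a k - \<beta>"
          using neg 2 anti[of p k] anti[of k "min q (n - 1)"] \<open>k < n\<close>
          unfolding \<alpha>_def \<beta>_def by auto
        then show ?thesis by (rule mult_nonpos_nonpos[OF _ mult_nonpos_nonneg])
      next
        case 3
        have "0 \<le> s * c k" "a k - \<alpha> \<le> 0" "a k - \<beta> \<le> 0"
          using pos' 3 anti[of p k] anti[of q k] \<open>k < n\<close> \<open>p \<le> q\<close>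
          unfolding \<alpha>_def \<beta>_def by auto
        then show ?thesis by (rule mult_nonneg_nonneg[OF _ mult_nonpos_nonpos])
      qed
    qed
    then show ?thesis
      by (simp add: d_def mult_ac)
  qed
  then have g_mono: "s * g x \<le> s * g y" if "x \<le> y" for x y
    unfolding g_def using that by (intro exp_sum_mono)
  have h_nat: "0 \<le> h (real m)" for m
    unfolding h_def exp_sum_shift_nonneg_iff by (rule at_nat)
  have "0 \<le> h t"
  proof (cases "s = 1")
    case True
    then have "mono g"
      using g_mono by (auto intro: monoI)
    moreover have "h 0 = 0"
      using zero by (simp add: h_def exp_sum_at_0)
    ultimately show ?thesis
      using nonneg_after_one_if_deriv_sign_mono[of h "\<lambda>x. exp (x * (\<beta> - \<alpha>))" g t]
        deriv h_nat[of 1] \<open>1 \<le> t\<close> by simp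
  next
    case False
    then have "antimono g"
      using s g_mono by (auto intro: antimonoI)
    then show ?thesis
      using nonneg_if_deriv_sign_antimono_nonneg_at_nat[of h "\<lambda>x. exp (x * (\<beta> - \<alpha>))" g t]
        deriv h_nat \<open>1 \<le> t\<close> by simp
  qed
  then show ?thesis
    unfolding h_def exp_sum_shift_nonneg_iff .
qed

lemma pow_mat_diag: "mat_diag n f ^\<^sub>m k = mat_diag n (\<lambda>i. f i ^ k)"
proof (induction k)
  case 0
  then show ?case by (simp add: mat_diag_def)
next
  case (Suc k)
  then show ?case by (simp add: power_Suc2 del: power_Suc)
qed

lemma pow_mat_orthogonal_conj:
  assumes "real_orthogonal n U" and "D \<in> carrier_mat n n"
  shows "(U * D * U\<^sup>T) ^\<^sub>m k = U * D ^\<^sub>m k * U\<^sup>T"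
proof (rule similar_mat_wit_pow_id)
  show "similar_mat_wit (U * D * U\<^sup>T) D U U\<^sup>T"
    using assms unfolding real_orthogonal_def similar_mat_wit_def by auto
qed

lemma index_mat_diag_conj:
  fixes U :: "'a :: comm_semiring_0 mat"
  assumes "U \<in> carrier_mat n n" and "i < n" and "j < n"
  shows "(U * mat_diag n f * U\<^sup>T) $$ (i, j) = (\<Sum>k<n. U $$ (i, k) * U $$ (j, k) * f k)"
  unfolding mat_diag_mult_right[OF assms(1)] using assms
  by (simp add: scalar_prod_def lessThan_atLeast0 mult_ac)

lemma pow_mat_nonneg:
  fixes A :: "'a :: linordered_semidom mat"
  assumes "A \<in> carrier_mat n n" and "\<And>i j. i < n \<Longrightarrow> j < n \<Longrightarrow> 0 \<le> A $$ (i, j)"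
    and "i < n" and "j < n"
  shows "0 \<le> (A ^\<^sub>m k) $$ (i, j)"
  using assms(3,4)
proof (induction k arbitrary: i j)
  case (Suc k)
  then show ?case
    using assms(1,2) by (auto simp: scalar_prod_def intro!: sum_nonneg)
qed (use assms(1) in simp)

lemma mat_rpow_entry_of_nat:
  assumes "real_orthogonal n U" and "\<And>k. k < n \<Longrightarrow> 0 < lam k" and "i < n" and "j < n"
  shows "mat_rpow_entry n U lam (real m) i j = ((U * mat_diag n lam * U\<^sup>T) ^\<^sub>m m) $$ (i, j)"
proof -
  have "U \<in> carrier_mat n n"
    using assms(1) by (simp add: real_orthogonal_def)
  have pow: "(U * mat_diag n lam * U\<^sup>T) ^\<^sub>m m = U * mat_diag n (\<lambda>k. lam k ^ m) * U\<^sup>T"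
    using assms(1) by (simp add: pow_mat_orthogonal_conj pow_mat_diag)
  show ?thesis
    unfolding pow index_mat_diag_conj[OF \<open>U \<in> carrier_mat n n\<close> assms(3,4)] mat_rpow_entry_def
    using assms(2) by (intro sum.cong refl) (simp add: powr_realpow)
qed

lemma mat_rpow_entry_eq_exp_sum:
  assumes "\<And>k. k < n \<Longrightarrow> 0 < lam k"
  shows "mat_rpow_entry n U lam t i j =
    exp_sum n (\<lambda>k. U $$ (i, k) * U $$ (j, k)) (\<lambda>k. ln (lam k)) t"
  unfolding mat_rpow_entry_def exp_sum_def
proof (rule sum.cong)
  fix k assume "k \<in> {..<n}"
  then have "lam k \<noteq> 0"
    using assms by force
  then show "U $$ (i, k) * U $$ (j, k) * lam k powr t =
      U $$ (i, k) * U $$ (j, k) * exp (t * ln (lam k))"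
    by (simp add: powr_def)
qed simp

lemma Least_eventually_nonneg:
  fixes G :: "real \<Rightarrow> real"
  assumes cont: "continuous_on UNIV G" and "0 \<le> m\<^sub>0" and tail: "\<forall>t\<ge>m\<^sub>0. 0 \<le> G t"
  shows "(LEAST m. 0 \<le> m \<and> (\<forall>t\<ge>m. 0 \<le> G t)) \<in> {0..m\<^sub>0}"
proof -
  define S where "S = {m. 0 \<le> m \<and> (\<forall>t\<ge>m. 0 \<le> G t)}"
  have "m\<^sub>0 \<in> S" and "bdd_below S"
    using assms unfolding S_def by (auto intro: bdd_belowI[of _ 0])
  define L where "L = Inf S"
  have "L \<le> m\<^sub>0" and L_lower: "\<And>m. m \<in> S \<Longrightarrow> L \<le> m"
    unfolding L_def using \<open>m\<^sub>0 \<in> S\<close> \<open>bdd_below S\<close> by (auto intro: cInf_lower)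
  have "0 \<le> L"
    unfolding L_def using \<open>m\<^sub>0 \<in> S\<close> by (intro cInf_greatest) (auto simp: S_def)
  have above: "0 \<le> G t" if "L < t" for t
  proof -
    obtain m where "m \<in> S" "m < t"
      using \<open>L < t\<close> cInf_less_iff[of S t] \<open>m\<^sub>0 \<in> S\<close> \<open>bdd_below S\<close> unfolding L_def by auto
    then show ?thesis unfolding S_def by auto
  qed
  have "0 \<le> G L"
  proof (rule tendsto_lowerbound)
    have "isCont G L"
      using cont by (simp add: continuous_on_eq_continuous_at)
    then show "(G \<longlongrightarrow> G L) (at_right L)"
      unfolding isCont_def by (rule tendsto_mono[OF at_le, rotated]) simp
    show "\<forall>\<^sub>F t in at_right L. 0 \<le> G t"
      using eventually_at_right_less[of L] by eventually_elim (rule above)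
    show "at_right L \<noteq> bot"
      by simp
  qed
  then have "L \<in> S"
    using \<open>0 \<le> L\<close> above unfolding S_def by (auto simp: le_less)
  then have "(LEAST m. 0 \<le> m \<and> (\<forall>t\<ge>m. 0 \<le> G t)) = L"
    using L_lower unfolding S_def by (intro Least_equality) auto
  then show ?thesis
    using \<open>0 \<le> L\<close> \<open>L \<le> m\<^sub>0\<close> by simp
qed

theorem lemma4p2:
  fixes n :: nat and A U :: "real mat" and lam :: "nat \<Rightarrow> real" and i j :: nat
  assumes "doubly_nonnegative n A"
    and "invertible_mat A"
    and "real_orthogonal n U"
    and "\<And>k. k < n \<Longrightarrow> lam k > 0"
    and "\<And>k l. k \<le> l \<Longrightarrow> l < n \<Longrightarrow> lam l \<le> lam k"
    and "A = U * mat_diag n lam * U\<^sup>T"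
    and "i < n" and "j < n"
  shows "(sign_change_entry n U i j = 0 \<or> sign_change_entry n U i j = 1
            \<longrightarrow> critical_exponent n U lam i j = 0)
       \<and> (sign_change_entry n U i j = 2 \<longrightarrow> critical_exponent n U lam i j \<le> 1)"
proof -
  define c where "c k = U $$ (i, k) * U $$ (j, k)" for k
  define a where "a k = ln (lam k)" for k
  have entry: "mat_rpow_entry n U lam t i j = exp_sum n c a t" for t
    unfolding c_def a_def using assms(4) by (rule mat_rpow_entry_eq_exp_sum)
  have anti: "a l \<le> a k" if "k \<le> l" "l < n" for k l
    unfolding a_def using assms(4,5) that by simp
  have A_pow: "exp_sum n c a (real m) = (A ^\<^sub>m m) $$ (i, j)" for m
    unfolding entry[symmetric] assms(6) using assms(3,4,7,8) by (rule mat_rpow_entry_of_nat)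
  have at_nat: "0 \<le> exp_sum n c a (real m)" for m
    unfolding A_pow using assms(1,7,8) by (intro pow_mat_nonneg) (auto simp: doubly_nonnegative_def)
  have changes: "sign_change_entry n U i j = sign_changes (map c [0..<n])"
    unfolding sign_change_entry_def c_def ..
  have critical: "critical_exponent n U lam i j \<in> {0..m\<^sub>0}"
    if "0 \<le> m\<^sub>0" and "\<forall>t\<ge>m\<^sub>0. 0 \<le> exp_sum n c a t" for m\<^sub>0
    unfolding critical_exponent_def entry using continuous_on_exp_sum that
    by (rule Least_eventually_nonneg)
  show ?thesis
  proof (intro conjI impI)
    assume "sign_change_entry n U i j = 0 \<or> sign_change_entry n U i j = 1"
    then have "\<forall>t\<ge>0. 0 \<le> exp_sum n c a t"
      using exp_sum_nonneg_if_one_sign_change[OF anti at_nat] changes by auto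
    then show "critical_exponent n U lam i j = 0"
      using critical[of 0] by simp
  next
    assume "sign_change_entry n U i j = 2"
    have "\<forall>t\<ge>1. 0 \<le> exp_sum n c a t"
    proof (cases "i = j")
      case True
      then show ?thesis by (auto simp: exp_sum_def c_def intro!: sum_nonneg)
    next
      case False
      then have "exp_sum n c a 0 = 0"
        using A_pow[of 0] assms(1,7,8) by (auto simp: doubly_nonnegative_def)
      then show ?thesis
        using exp_sum_nonneg_if_two_sign_changes[OF anti at_nat] changes
          \<open>sign_change_entry n U i j = 2\<close> by auto
    qed
    then show "critical_exponent n U lam i j \<le> 1"
      using critical[of 1] by simp
  qed
qed

end
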